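(* For each $n$ let $p=p_n\in[0,1]$, let $X\sim\mathrm{Bin}(n,p)$ and $R = R_n = 1 + X + \frac{X(X-1)}{2}$. If $np\to\infty$ as $n\to\infty$, then $$\mathbb{V}(R) = n^3p^3(1-p)(1+o(1)) \quad (n\to\infty).$$
   Context: $\mathbb{V}$ denotes variance. $R$ is the number of regions formed when $n$ cuts are attempted on a pizza, each succeeding independently with probability $p$, with every successful cut meeting all prior successful cuts. *)

theory Defs
  imports "HOL-Probability.Probability"
begin

text \<open>Number of pizza regions when X of the attempted cuts succeed:
  R = 1 + X + X(X-1)/2, as a real number.\<close>
definition regions :: "nat \<Rightarrow> real" where
  "regions x = 1 + real x + real x * (real x - 1) / 2"

definition var_R :: "nat \<Rightarrow> real \<Rightarrow> real" where
  "var_R n q = measure_pmf.variance (binomial_pmf n q) regions"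

end

theory Submission
  imports Defs
begin

text \<open>Since R is a quadratic polynomial in X, its variance is a fixed combination of the factorial
  moments E[C(X,j)] = C(n,j) p^j, j \<le> 4. Expanding R and R^2 in the basis C(X,j) yields the exact
  formula Var R = (1-p) (np + 5/2 n(n-1) p^2 + 1/2 n(n-1)(2n-3) p^3). Dividing by (np)^3 (1-p)
  leaves 1 plus a polynomial without constant term in 1/(np) and 1/n, both of which tend to 0.\<close>

lemma expectation_binomial_pmf_choose:
  assumes "p \<in> {0..1}"
  shows "measure_pmf.expectation (binomial_pmf n p) (\<lambda>k. real (k choose j))
           = real (n choose j) * p ^ j"
proof (cases "j \<le> n")
  case False
  then show ?thesis
    using assms by (simp add: expectation_binomial_pmf' binomial_eq_0 sum.neutral)
next
  case True
  define w where "w m i = real (m choose i) * p ^ i * (1 - p) ^ (m - i)" for m i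
  have "measure_pmf.expectation (binomial_pmf n p) (\<lambda>k. real (k choose j))
      = (\<Sum>k\<in>{j..n}. w n k * real (k choose j))"
    using assms by (simp add: expectation_binomial_pmf' w_def)
       (rule sum.mono_neutral_right; auto)
  also have "\<dots> = (\<Sum>i\<le>n - j. w n (i + j) * real ((i + j) choose j))"
    using True sum.shift_bounds_cl_nat_ivl[of "\<lambda>k. w n k * real (k choose j)" 0 j "n - j"]
    by (simp add: atLeast0AtMost)
  also have "\<dots> = (\<Sum>i\<le>n - j. real (n choose j) * p ^ j * w (n - j) i)"
  proof (rule sum.cong[OF refl])
    fix i assume "i \<in> {..n - j}"
    then have "real (n choose (i + j)) * real ((i + j) choose j)
        = real (n choose j) * real ((n - j) choose i)"
      using True choose_mult[of j "i + j" n] by (simp flip: of_nat_mult)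
    moreover have "n - (i + j) = n - j - i"
      by simp
    ultimately show "w n (i + j) * real ((i + j) choose j)
        = real (n choose j) * p ^ j * w (n - j) i"
      unfolding w_def power_add by (metis (no_types, lifting) mult.commute mult.left_commute)
  qed
  also have "\<dots> = real (n choose j) * p ^ j"
    using binomial_ring[of p "1 - p" "n - j"]
    by (simp add: w_def sum_distrib_left[symmetric] atLeast0AtMost)
  finally show ?thesis .
qed

lemma real_choose_2_3_4:
  "real (k choose 2) = real k * (real k - 1) / 2"
  "real (k choose 3) = real k * (real k - 1) * (real k - 2) / 6"
  "real (k choose 4) = real k * (real k - 1) * (real k - 2) * (real k - 3) / 24"
  by (simp_all add: binomial_gbinomial gbinomial_prod_rev eval_nat_numeral prod.atLeast0_lessThan_Suc)

lemma regions_eq_choose: "regions k = 1 + real k + real (k choose 2)"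
  by (simp add: regions_def real_choose_2_3_4)

lemma regions_squared_eq_choose:
  "(regions k)\<^sup>2
     = 1 + 3 * real k + 9 * real (k choose 2) + 12 * real (k choose 3) + 6 * real (k choose 4)"
  by (simp add: regions_def real_choose_2_3_4 power2_eq_square field_simps)

lemma var_R_closed_form:
  assumes "p \<in> {0..1}"
  shows "var_R n p = (1 - p) * (real n * p + 5/2 * real n * (real n - 1) * p^2
                        + real n * (real n - 1) * (2 * real n - 3) / 2 * p^3)"
proof -
  let ?E = "measure_pmf.expectation (binomial_pmf n p)"
  have moment: "?E (\<lambda>k. real (k choose j)) = real (n choose j) * p ^ j" for j
    using assms by (rule expectation_binomial_pmf_choose)
  have mean: "?E regions = 1 + real n * p + real (n choose 2) * p^2"
    using assms moment[of 1] moment[of 2] by (simp add: regions_eq_choose[abs_def])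
  have second_moment: "?E (\<lambda>k. (regions k)\<^sup>2) = 1 + 3 * (real n * p)
      + 9 * (real (n choose 2) * p^2) + 12 * (real (n choose 3) * p^3) + 6 * (real (n choose 4) * p^4)"
    using assms moment[of 1] moment[of 2] moment[of 3] moment[of 4]
    by (simp add: regions_squared_eq_choose)
  have "var_R n p = ?E (\<lambda>k. (regions k)\<^sup>2) - (?E regions)\<^sup>2"
    using assms unfolding var_R_def by (simp add: measure_pmf.variance_eq)
  also have "\<dots> = (1 - p) * (real n * p + 5/2 * real n * (real n - 1) * p^2
                        + real n * (real n - 1) * (2 * real n - 3) / 2 * p^3)"
    unfolding mean second_moment real_choose_2_3_4
    by (simp add: field_simps power2_eq_square power3_eq_cube power4_eq_xxxx)
  finally show ?thesis .
qed

lemma var_R_eq_leading_term: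
  assumes "p \<in> {0..1}" and "real n * p \<noteq> 0"
  defines "u \<equiv> inverse (real n * p)" and "v \<equiv> inverse (real n)"
  shows "var_R n p
           = (real n * p) ^ 3 * (1 - p) * (1 + (u\<^sup>2 + 5/2 * u - 5/2 * u * v - 5/2 * v + 3/2 * v\<^sup>2))"
proof -
  have "real n \<noteq> 0" "p \<noteq> 0"
    using assms(2) by auto
  then show ?thesis
    unfolding var_R_closed_form[OF assms(1)] u_def v_def
    by (simp add: field_simps power2_eq_square power3_eq_cube)
qed

theorem theorem3:
  fixes p :: "nat \<Rightarrow> real"
  assumes "\<And>n. 0 \<le> p n \<and> p n \<le> 1"
    and "filterlim (\<lambda>n. real n * p n) at_top sequentially"
  shows "\<exists>e :: nat \<Rightarrow> real. e \<longlonglongrightarrow> 0 \<and>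
    (\<forall>\<^sub>F n in sequentially.
       var_R n (p n) = (real n * p n) ^ 3 * (1 - p n) * (1 + e n))"
proof -
  define u where "u n = inverse (real n * p n)" for n
  define v where "v n = inverse (real n)" for n
  define e where "e n = (u n)\<^sup>2 + 5/2 * u n - 5/2 * u n * v n - 5/2 * v n + 3/2 * (v n)\<^sup>2" for n
  have "u \<longlonglongrightarrow> 0"
    unfolding u_def using assms(2) by (rule tendsto_inverse_0_at_top)
  moreover have "v \<longlonglongrightarrow> 0"
    unfolding v_def using filterlim_real_sequentially by (rule tendsto_inverse_0_at_top)
  ultimately have "e \<longlonglongrightarrow> 0"
    unfolding e_def by (auto intro!: tendsto_eq_intros)
  moreover have "\<forall>\<^sub>F n in sequentially. 1 \<le> real n * p n"
    using assms(2) unfolding filterlim_at_top by blast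
  then have "\<forall>\<^sub>F n in sequentially. var_R n (p n) = (real n * p n) ^ 3 * (1 - p n) * (1 + e n)"
  proof eventually_elim
    case (elim n)
    then have "real n * p n \<noteq> 0"
      by linarith
    with assms(1)[of n] show ?case
      unfolding e_def u_def v_def by (intro var_R_eq_leading_term) auto
  qed
  ultimately show ?thesis
    by blast
qed

end
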